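(* Let $p>5$ be a prime such that $-1$ is a quadratic residue modulo $p$ and $2$ and $3$ are quadratic non-residues modulo $p$. Then the path system $\mathcal{P}_p$ on the Paley graph $G_p$ is not metrizable.
   Context: Let $R$ and $N$ denote the sets of nonzero quadratic residues and quadratic non-residues in $\mathbb{F}_p$. The Paley graph $G_p$ has vertex set $\mathbb{F}_p$, with $a,b$ adjacent iff $a-b\in R$. A path system $\mathcal{P}$ in a graph $G=(V,E)$ is a collection of simple paths such that for every pair of distinct vertices $u,v$ there is exactly one path $P_{u,v}\in\mathcal{P}$ connecting them. $\mathcal{P}$ is metrizable if there exists $w:E\to(0,\infty)$ such that for all $u,v$, $w(P_{u,v})\le w(Q)$ for every $u$–$v$ path $Q$ in $G$ (where $w$ of a path is the sum of its edge weights). The path system $\mathcal{P}_p$ is defined for $a\neq b\in\mathbb{F}_p$ by: if $b-a\in R$, then $P_{a,b}=(a,b)$; if $b-a=3$, then $P_{a,b}=(a,a+1,a+2,b)$ (and $P_{b,a}$ is the same path); if $b-a\in N$ and $b-a\neq\pm3$, then $P_{a,b}=(a,\tfrac{a+b}{2},b)$. *)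

theory Defs
  imports "HOL-Number_Theory.Number_Theory"
begin

definition is_path :: "'a set \<Rightarrow> ('a \<Rightarrow> 'a \<Rightarrow> bool) \<Rightarrow> 'a \<Rightarrow> 'a \<Rightarrow> 'a list \<Rightarrow> bool" where
  "is_path V E u v Q \<longleftrightarrow> Q \<noteq> [] \<and> hd Q = u \<and> last Q = v \<and> distinct Q \<and> set Q \<subseteq> V \<and>
     (\<forall>i. Suc i < length Q \<longrightarrow> E (Q ! i) (Q ! Suc i))"

definition path_weight :: "('a set \<Rightarrow> real) \<Rightarrow> 'a list \<Rightarrow> real" where
  "path_weight w Q = sum_list (map (\<lambda>(x, y). w {x, y}) (zip Q (tl Q)))"

definition metrizable :: "'a set \<Rightarrow> ('a \<Rightarrow> 'a \<Rightarrow> bool) \<Rightarrow> ('a \<Rightarrow> 'a \<Rightarrow> 'a list) \<Rightarrow> bool" where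
  "metrizable V E P \<longleftrightarrow> (\<exists>w :: 'a set \<Rightarrow> real.
     (\<forall>x\<in>V. \<forall>y\<in>V. E x y \<longrightarrow> w {x, y} > 0) \<and>
     (\<forall>u\<in>V. \<forall>v\<in>V. u \<noteq> v \<longrightarrow> (\<forall>Q. is_path V E u v Q \<longrightarrow> path_weight w (P u v) \<le> path_weight w Q)))"

text \<open>Paley graph: F_p represented as {0..<p} (integers), a ~ b iff b - a is a
nonzero quadratic residue mod p.\<close>
definition paley_vertices :: "int \<Rightarrow> int set" where
  "paley_vertices p = {0..<p}"

definition paley_adj :: "int \<Rightarrow> int \<Rightarrow> int \<Rightarrow> bool" where
  "paley_adj p a b \<longleftrightarrow> (b - a) mod p \<noteq> 0 \<and> QuadRes p (b - a)"

text \<open>The path system P_p. Division by 2 in F_p is multiplication by (p+1)/2.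
If b - a = -3 then P_{a,b} is the reverse of P_{b,a} = (b,b+1,b+2,a).\<close>
definition paley_ps :: "int \<Rightarrow> int \<Rightarrow> int \<Rightarrow> int list" where
  "paley_ps p a b =
    (if (b - a) mod p \<noteq> 0 \<and> QuadRes p (b - a) then [a, b]
     else if (b - a) mod p = 3 mod p then [a, (a + 1) mod p, (a + 2) mod p, b]
     else if (b - a) mod p = (-3) mod p then [a, (a - 1) mod p, (a - 2) mod p, b]
     else [a, ((a + b) * ((p + 1) div 2)) mod p, b])"

end

(*
  Suppose w makes every chosen path shortest. Averaging w over all translations gives a weight
  f on differences with f(-x) = f(x), and the chosen paths yield linear inequalities: for
  residues u, y - u,
    f(y) <= f(u) + f(y - u)      if y is a residue,
    2 f(y/2) <= f(u) + f(y - u)  if y is a nonresidue other than 3 and -3,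
    3 f(1) <= f(u) + f(3 - u)    if y = 3.
  Let T be the set of residues (other than 3/2 and -3/2) on which f is maximal and U the other
  ones. For t in T the middle inequality with y = 2t, a nonresidue, forces u into T whenever
  u and 2t - u are residues; as 2t has m representations, where p = 4m + 1, this gives
  |T| >= m - 4, and 1 in U gives |T| <= m + 3. It also makes 2t - y a nonresidue for nearly all
  t in T and y in U, so the character sum of 2t - y over T x U is close to -|T||U|, whereas
  Cauchy-Schwarz and the autocorrelations of the Legendre symbol bound its square by
  |T||U|(p - |U|). This is impossible for p >= 53; the only remaining prime, 29, is handled
  by hand.
*)
theory Submission
  imports Defs
begin

lemma dvd_abs_less_imp_eq_0:
  fixes d p :: int
  assumes "p dvd d" and "\<bar>d\<bar> < p"
  shows "d = 0"
  using assms zdvd_imp_le[of p "\<bar>d\<bar>"] by fastforce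

lemma sum_reindex_endo_inj:
  assumes "finite A" and "f ` A \<subseteq> A" and "inj_on f A"
  shows "(\<Sum>x\<in>A. g (f x)) = (\<Sum>x\<in>A. g x)"
  using sum.reindex[OF assms(3), of g] endo_inj_surj[OF assms] by simp

lemma square_sum_le_card_mult_sum_squares:
  fixes g :: "'a \<Rightarrow> int"
  shows "(\<Sum>x\<in>A. g x)^2 \<le> int (card A) * (\<Sum>x\<in>A. (g x)^2)"
proof -
  have "0 \<le> (\<Sum>x\<in>A. \<Sum>y\<in>A. (g x - g y)^2)" by (intro sum_nonneg) auto
  also have "\<dots> = (\<Sum>x\<in>A. \<Sum>y\<in>A. ((g x)^2 + (g y)^2 - 2 * (g x * g y)))"
    by (intro sum.cong refl) (simp add: power2_eq_square algebra_simps)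
  also have "\<dots> = 2 * (int (card A) * (\<Sum>x\<in>A. (g x)^2)) - 2 * (\<Sum>x\<in>A. g x)^2"
    by (simp add: sum.distrib sum_subtractf sum_distrib_left sum_distrib_right power2_eq_square algebra_simps)
  finally show ?thesis by simp
qed

lemma sum_sum_of_bool_le:
  assumes "finite B" and "\<And>x. x \<in> A \<Longrightarrow> int (card {y\<in>B. P x y}) \<le> k"
  shows "(\<Sum>x\<in>A. \<Sum>y\<in>B. of_bool (P x y) :: int) \<le> int (card A) * k"
proof -
  have "(\<Sum>y\<in>B. of_bool (P x y) :: int) = int (card {y\<in>B. P x y})" for x
    using assms(1) by (simp add: Int_def)
  then show ?thesis
    using assms(2) by (simp add: sum_bounded_above)
qed

lemma min_mult_bounds:
  fixes a b m :: int
  assumes ab: "a + b = 2 * m - 2" and "m - 5 \<le> min a b"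
  shows "(m - 5) * (m - 1) \<le> a * b - 4 * min a b" and "a * b \<le> (m - 1)^2"
proof -
  define \<mu> where "\<mu> = min a b"
  have \<mu>_ge: "m - 5 \<le> \<mu>" and \<mu>_le: "\<mu> \<le> m - 1"
    using assms unfolding \<mu>_def by auto
  have prod: "a * b = \<mu> * (2 * m - 2 - \<mu>)"
  proof (cases "a \<le> b")
    case True
    moreover have "b = 2 * m - 2 - a"
      using ab by simp
    ultimately show ?thesis
      unfolding \<mu>_def by simp
  next
    case False
    moreover have "a = 2 * m - 2 - b"
      using ab by simp
    ultimately show ?thesis
      unfolding \<mu>_def by (simp add: mult.commute)
  qed
  have "0 \<le> (\<mu> - (m - 5)) * ((m - 1) - \<mu>)"
    using \<mu>_ge \<mu>_le by simp
  then show "(m - 5) * (m - 1) \<le> a * b - 4 * min a b"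
    unfolding prod \<mu>_def[symmetric] by (simp add: algebra_simps)
  have "(m - 1)^2 - a * b = (m - 1 - \<mu>)^2"
    unfolding prod by (simp add: power2_eq_square algebra_simps)
  then show "a * b \<le> (m - 1)^2"
    by (metis diff_ge_0_iff_ge zero_le_power2)
qed

text \<open>The first bound of \<open>min_mult_bounds\<close> gives \<open>-s \<ge> (m - 5) (m - 1)\<close>, while
  \<open>a b (4 m + 1 - b) \<le> (m - 1)\<^sup>2 (3 m + 6)\<close>; squaring contradicts \<open>(m - 5)\<^sup>2 > 3 m + 6\<close>.\<close>
lemma extremal_counts_impossible:
  fixes a b m s E :: int
  assumes ab: "a + b = 2 * m - 2" and a_ge: "m - 4 \<le> a" and a_le: "a \<le> m + 3" and m: "13 \<le> m"
    and s: "s \<le> 2 * E - a * b" and Ea: "E \<le> 2 * a" and Eb: "E \<le> 2 * b"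
    and sq: "s^2 \<le> a * (b * (4 * m + 1 - b))"
  shows False
proof -
  have min_ge: "m - 5 \<le> min a b"
    using ab a_ge a_le by auto
  have "(m - 5) * (m - 1) \<le> - s"
    using min_mult_bounds(1)[OF ab min_ge] s Ea Eb by linarith
  then have "((m - 5) * (m - 1))^2 \<le> s^2"
    using power_mono[of _ _ 2] m by fastforce
  also note sq
  also have "a * (b * (4 * m + 1 - b)) \<le> (m - 1)^2 * (3 * m + 6)"
  proof -
    have "0 \<le> a * b"
      using min_ge m by simp
    moreover have "4 * m + 1 - b \<le> 3 * m + 6" and "0 \<le> 4 * m + 1 - b"
      using ab a_le a_ge m by linarith+
    ultimately show ?thesis
      using min_mult_bounds(2)[OF ab min_ge]
      by (metis mult.assoc mult_mono' power2_eq_square mult_nonneg_nonneg zero_le_square)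
  qed
  finally have "(m - 1)^2 * (m - 5)^2 \<le> (m - 1)^2 * (3 * m + 6)"
    by (simp add: power_mult_distrib mult.commute)
  then have "(m - 5)^2 \<le> 3 * m + 6"
    using m by simp
  moreover have "8 * (m - 5) \<le> (m - 5)^2"
    unfolding power2_eq_square using m by (intro mult_right_mono) simp_all
  ultimately have "8 * (m - 5) \<le> 3 * m + 6"
    by linarith
  then show False
    using m by presburger
qed

locale odd_prime =
  fixes p :: int
  assumes prime: "prime p" and gt_2: "p > 2"
begin

definition chi :: "int \<Rightarrow> int" where
  "chi x = Legendre x p"

lemma p_pos: "p > 0"
  using gt_2 by simp

lemma p_odd: "odd p"
  using prime gt_2 prime_odd_int by blast

definition half :: int where
  "half = (p + 1) div 2"

lemma two_mult_half: "2 * half = p + 1"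
  unfolding half_def using p_odd by (auto elim!: oddE)

lemma mod_two_mult_half: "(2 * half * x) mod p = x mod p"
proof -
  have "2 * half * x = x + p * x"
    using two_mult_half by (simp add: algebra_simps)
  then show ?thesis by simp
qed

lemma double_mod_eq_iff:
  assumes "x \<in> {0..<p}"
  shows "(2 * x) mod p = c mod p \<longleftrightarrow> x = (c * half) mod p"
proof
  assume "(2 * x) mod p = c mod p"
  then have "(2 * x * half) mod p = (c * half) mod p"
    by (metis mod_mult_left_eq)
  then show "x = (c * half) mod p"
    using assms mod_two_mult_half[of x] by (simp add: mult_ac)
next
  assume "x = (c * half) mod p"
  then have "(2 * x) mod p = (2 * half * c) mod p"
    by (simp add: mod_mult_right_eq mult_ac)
  then show "(2 * x) mod p = c mod p"
    by (simp add: mod_two_mult_half)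
qed

lemma diff_mod_eq_imp:
  assumes "y \<in> {0..<p}" and "(x - y) mod p = e"
  shows "y = (x - e) mod p"
proof -
  have "y = (x - (x - y)) mod p"
    using assms(1) by simp
  also have "\<dots> = (x - e) mod p"
    using assms(2) by (metis mod_diff_right_eq)
  finally show ?thesis .
qed

lemma double_diff_mod_eq_imp:
  assumes "t \<in> {0..<p}" and "(2 * t - y) mod p = e"
  shows "t = ((y + e) * half) mod p"
proof -
  have "(2 * t) mod p = ((2 * t - y) mod p + y) mod p"
    by (simp add: mod_add_left_eq)
  then have "(2 * t) mod p = (y + e) mod p"
    using assms(2) by (simp add: add.commute)
  then show ?thesis
    using double_mod_eq_iff[OF assms(1)] by blast
qed

lemma chi_mod [simp]: "chi (x mod p) = chi x"
  unfolding chi_def Legendre_def QuadRes_def cong_def by simp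

lemma chi_cong: "x mod p = y mod p \<Longrightarrow> chi x = chi y"
  by (metis chi_mod)

lemma chi_eq_0_iff: "chi x = 0 \<longleftrightarrow> x mod p = 0"
  unfolding chi_def Legendre_def cong_def by simp

lemma chi_eq_1_iff: "chi x = 1 \<longleftrightarrow> x mod p \<noteq> 0 \<and> QuadRes p x"
  unfolding chi_def Legendre_def cong_def by simp

lemma chi_eq_minus_1_iff: "chi x = -1 \<longleftrightarrow> x mod p \<noteq> 0 \<and> \<not> QuadRes p x"
  unfolding chi_def Legendre_def cong_def by simp

lemma not_dvd_small: "0 < \<bar>k\<bar> \<Longrightarrow> \<bar>k\<bar> < p \<Longrightarrow> \<not> p dvd k"
  using dvd_abs_less_imp_eq_0 by fastforce

lemma chi_cases: "chi x = 1 \<or> chi x = -1 \<or> chi x = 0"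
  unfolding chi_def Legendre_def by auto

lemma chi_1: "chi 1 = 1"
  using gt_2 unfolding chi_eq_1_iff QuadRes_def by (auto intro: exI[of _ 1])

lemma chi_euler: "[chi a = a ^ nat ((p - 1) div 2)] (mod p)"
proof -
  have "prime (nat p)" and "2 < nat p"
    using prime gt_2 by (simp_all add: prime_nat_iff_prime)
  from euler_criterion[OF this, of a]
  show ?thesis
    using gt_2 unfolding chi_def by (simp add: nat_div_distrib nat_diff_distrib)
qed

lemma chi_mult: "chi (x * y) = chi x * chi y"
proof -
  have "[chi (x * y) = chi x * chi y] (mod p)"
    using chi_euler[of "x * y"] cong_mult[OF chi_euler[of x] chi_euler[of y]]
    by (metis cong_sym cong_trans power_mult_distrib)
  then have "p dvd chi (x * y) - chi x * chi y"
    by (simp add: cong_iff_dvd_diff)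
  moreover have "\<bar>chi (x * y) - chi x * chi y\<bar> < p"
    using chi_cases[of "x * y"] chi_cases[of x] chi_cases[of y] gt_2 by auto
  ultimately show ?thesis
    using dvd_abs_less_imp_eq_0 by fastforce
qed

lemma chi_square: "x mod p \<noteq> 0 \<Longrightarrow> chi x * chi x = 1"
  using chi_cases[of x] chi_eq_0_iff[of x] by auto

lemma inj_on_mod_mult:
  assumes "\<not> p dvd r"
  shows "inj_on (\<lambda>x. (r * x + k) mod p) {0..<p}"
proof (rule inj_onI)
  fix x y
  assume xy: "x \<in> {0..<p}" "y \<in> {0..<p}" "(r * x + k) mod p = (r * y + k) mod p"
  then have "p dvd r * (x - y)"
    by (simp add: mod_eq_dvd_iff right_diff_distrib)
  then have "p dvd x - y"
    using assms prime by (simp add: prime_dvd_mult_iff)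
  moreover have "\<bar>x - y\<bar> < p"
    using xy by auto
  ultimately show "x = y"
    using dvd_abs_less_imp_eq_0 by fastforce
qed

lemma sum_mod_affine:
  assumes "\<not> p dvd r"
  shows "(\<Sum>x\<in>{0..<p}. g ((r * x + k) mod p)) = (\<Sum>x\<in>{0..<p}. g x)"
  by (rule sum_reindex_endo_inj[OF _ _ inj_on_mod_mult[OF assms]]) (use p_pos in auto)

lemma sum_mod_translate: "(\<Sum>x\<in>{0..<p}. g ((x + k) mod p)) = (\<Sum>x\<in>{0..<p}. g x)"
  using sum_mod_affine[of 1] prime gt_2 by (simp add: zdvd1_eq)

lemma sum_mod_scale:
  "\<not> p dvd r \<Longrightarrow> (\<Sum>x\<in>{0..<p}. g ((r * x) mod p)) = (\<Sum>x\<in>{0..<p}. g x)"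
  using sum_mod_affine[of r g 0] by simp

lemma quad_res_eq_small_square:
  assumes x: "x \<in> {1..<p}" and "chi x = 1"
  shows "x \<in> (\<lambda>z. z^2 mod p) ` {1..(p - 1) div 2}"
proof -
  obtain y where y: "[y^2 = x] (mod p)"
    using assms(2) unfolding chi_eq_1_iff QuadRes_def by blast
  define z where "z = y mod p"
  have z2: "z^2 mod p = x"
    using y x unfolding z_def cong_def by (simp add: power_mod)
  have "z \<noteq> 0"
    using z2 x by (auto simp: power2_eq_square)
  have "z < p" "0 \<le> z"
    using p_pos unfolding z_def by simp_all
  show ?thesis
  proof (cases "z \<le> (p - 1) div 2")
    case True
    then show ?thesis
      using z2 \<open>z \<noteq> 0\<close> \<open>0 \<le> z\<close> by (intro image_eqI[of x _ z]) auto
  next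
    case False
    then have "p - z \<in> {1..(p - 1) div 2}"
      using \<open>z < p\<close> p_odd by (auto elim!: oddE)
    moreover have "(p - z)^2 = z^2 + p * (p - 2 * z)"
      by (simp add: power2_eq_square algebra_simps)
    ultimately show ?thesis
      using z2 by (intro image_eqI[of x _ "p - z"]) auto
  qed
qed

lemma ex_nonresidue: "\<exists>r. chi r = -1"
proof (rule ccontr)
  assume "\<nexists>r. chi r = -1"
  then have "chi x = 1" if "x \<in> {1..<p}" for x
    using that chi_cases[of x] chi_eq_0_iff[of x] by auto
  then have "{1..<p} \<subseteq> (\<lambda>z. z^2 mod p) ` {1..(p - 1) div 2}"
    using quad_res_eq_small_square by blast
  then have "card {1..<p} \<le> card ((\<lambda>z. z^2 mod p) ` {1..(p - 1) div 2})"
    by (intro card_mono) auto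
  also have "\<dots> \<le> card {1..(p - 1) div 2}"
    by (rule card_image_le) simp
  finally show False
    using gt_2 by simp
qed

lemma sum_chi: "(\<Sum>x\<in>{0..<p}. chi x) = 0"
proof -
  obtain r where r: "chi r = -1"
    using ex_nonresidue by blast
  then have "\<not> p dvd r"
    using chi_eq_0_iff[of r] by (simp add: dvd_eq_mod_eq_0)
  then have "(\<Sum>x\<in>{0..<p}. chi x) = (\<Sum>x\<in>{0..<p}. chi ((r * x) mod p))"
    by (rule sum_mod_scale[symmetric])
  also have "\<dots> = - (\<Sum>x\<in>{0..<p}. chi x)"
    by (simp add: chi_mult r sum_negf)
  finally show ?thesis by simp
qed

lemma sum_chi_translate: "(\<Sum>x\<in>{0..<p}. chi (x + c)) = 0"
  using sum_mod_translate[of chi c] sum_chi by simp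

definition chi_autocorr :: "int \<Rightarrow> int" where
  "chi_autocorr c = (\<Sum>x\<in>{0..<p}. chi x * chi (x + c))"

lemma chi_autocorr_mod: "chi_autocorr (c mod p) = chi_autocorr c"
  unfolding chi_autocorr_def by (intro sum.cong refl arg_cong2[where f = "(*)"] chi_cong)
    (simp_all add: mod_add_right_eq)

lemma chi_autocorr_scale:
  assumes "\<not> p dvd r"
  shows "chi_autocorr (r * c) = chi_autocorr c"
proof -
  have "chi_autocorr (r * c) = (\<Sum>x\<in>{0..<p}. chi ((r * x) mod p) * chi ((r * x) mod p + r * c))"
    unfolding chi_autocorr_def by (rule sum_mod_scale[OF assms, symmetric])
  also have "\<dots> = (\<Sum>x\<in>{0..<p}. (chi r * chi r) * (chi x * chi (x + c)))"
  proof (intro sum.cong refl)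
    fix x
    have "chi ((r * x) mod p + r * c) = chi (r * (x + c))"
      by (rule chi_cong) (simp add: mod_add_left_eq distrib_left)
    then show "chi ((r * x) mod p) * chi ((r * x) mod p + r * c) = (chi r * chi r) * (chi x * chi (x + c))"
      by (simp add: chi_mult mult_ac)
  qed
  also have "\<dots> = chi_autocorr c"
    using assms chi_square[of r] unfolding chi_autocorr_def by (simp add: dvd_eq_mod_eq_0)
  finally show ?thesis .
qed

lemma chi_autocorr_0: "chi_autocorr 0 = p - 1"
proof -
  have "chi_autocorr 0 = (\<Sum>x\<in>insert 0 {1..<p}. if x = 0 then 0 else 1)"
    unfolding chi_autocorr_def using p_pos
    by (intro sum.cong) (auto simp: chi_square chi_eq_0_iff)
  then show ?thesis
    using p_pos by simp
qed

lemma sum_chi_autocorr: "(\<Sum>c\<in>{0..<p}. chi_autocorr c) = 0"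
proof -
  have "(\<Sum>c\<in>{0..<p}. chi_autocorr c) = (\<Sum>x\<in>{0..<p}. chi x * (\<Sum>c\<in>{0..<p}. chi (x + c)))"
    unfolding chi_autocorr_def by (subst sum.swap) (simp add: sum_distrib_left)
  also have "\<dots> = 0"
    using sum_chi_translate by (simp add: add.commute)
  finally show ?thesis .
qed

text \<open>Scaling by \<open>r \<noteq> 0\<close> permutes the nonzero classes, so all nonzero shifts have the
  same autocorrelation, and these \<open>p - 1\<close> equal values sum to \<open>-(p - 1)\<close>.\<close>
lemma chi_autocorr_nonzero:
  assumes "\<not> p dvd c"
  shows "chi_autocorr c = -1"
proof -
  have "0 = (\<Sum>r\<in>{0..<p}. chi_autocorr ((c * r) mod p))"
    by (simp only: sum_mod_scale[OF assms] sum_chi_autocorr)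
  also have "\<dots> = chi_autocorr 0 + (\<Sum>r\<in>{1..<p}. chi_autocorr (r * c))"
  proof -
    have "{0..<p} = insert 0 {1..<p}"
      using p_pos by auto
    then show ?thesis
      by (simp add: chi_autocorr_mod mult.commute)
  qed
  also have "\<dots> = (p - 1) * (1 + chi_autocorr c)"
  proof -
    have "\<And>r. r \<in> {1..<p} \<Longrightarrow> chi_autocorr (r * c) = chi_autocorr c"
      by (rule chi_autocorr_scale) (use dvd_abs_less_imp_eq_0 in fastforce)
    then show ?thesis
      using p_pos by (simp add: chi_autocorr_0 algebra_simps)
  qed
  finally show ?thesis
    using gt_2 by simp
qed

lemma sum_chi_diff_mult_chi_diff:
  "(\<Sum>x\<in>{0..<p}. chi (x - a) * chi (x - b)) = (if p dvd a - b then p - 1 else -1)"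
proof -
  have "(\<Sum>x\<in>{0..<p}. chi (x - a) * chi (x - b))
      = (\<Sum>x\<in>{0..<p}. chi ((x + a) mod p - a) * chi ((x + a) mod p - b))"
    by (rule sum_mod_translate[symmetric])
  also have "\<dots> = chi_autocorr (a - b)"
    unfolding chi_autocorr_def
    by (intro sum.cong refl arg_cong2[where f = "(*)"] chi_cong)
      (simp_all add: mod_diff_left_eq algebra_simps)
  also have "\<dots> = (if p dvd a - b then p - 1 else -1)"
    using chi_autocorr_nonzero chi_autocorr_0 chi_autocorr_mod[of "a - b"]
    by (auto simp: dvd_eq_mod_eq_0)
  finally show ?thesis .
qed

definition quad_res :: "int set" where
  "quad_res = {x\<in>{0..<p}. chi x = 1}"

lemma finite_quad_res [simp]: "finite quad_res"
  unfolding quad_res_def by (rule finite_subset[of _ "{0..<p}"]) auto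

lemma card_quad_res: "2 * int (card quad_res) + 1 = p"
proof -
  have "p = (\<Sum>x\<in>{0..<p}. 1 + chi x)"
    using sum_chi p_pos by (simp add: sum.distrib)
  also have "\<dots> = (\<Sum>x\<in>{0..<p}. 2 * of_bool (x \<in> quad_res) + of_bool (x = 0))"
  proof (intro sum.cong refl)
    fix x
    assume x: "x \<in> {0..<p}"
    then have "chi x = 0 \<longleftrightarrow> x = 0"
      using chi_eq_0_iff[of x] by simp
    then show "1 + chi x = 2 * of_bool (x \<in> quad_res) + of_bool (x = 0)"
      using x chi_cases[of x] unfolding quad_res_def by auto
  qed
  also have "\<dots> = 2 * int (card quad_res) + 1"
  proof -
    have "{0..<p} \<inter> {x. x \<in> quad_res} = quad_res" and "{0..<p} \<inter> {x. x = 0} = {0}"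
      using p_pos unfolding quad_res_def by auto
    then show ?thesis
      by (simp add: sum.distrib sum_distrib_left[symmetric])
  qed
  finally show ?thesis ..
qed

text \<open>Count via \<open>\<Sum>u. (1 + chi u) (1 + chi (y - u)) = 4 \<cdot> #{u. chi u = chi (y - u) = 1}\<close>:
  the terms with \<open>u = 0\<close> or \<open>u = y\<close> vanish because \<open>chi y = -1 = chi (-y)\<close>.\<close>
lemma card_quad_res_pairs:
  assumes "chi (-1) = 1" and y: "chi y = -1"
  shows "4 * int (card {u\<in>quad_res. chi (y - u) = 1}) = p - 1"
proof -
  have chi_neg: "chi (- x) = chi x" for x
    using chi_mult[of "-1" x] assms(1) by simp
  have "4 * int (card {u\<in>quad_res. chi (y - u) = 1})
      = (\<Sum>u\<in>{0..<p}. 4 * (if chi u = 1 \<and> chi (y - u) = 1 then 1 else 0))"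
  proof -
    have "{u\<in>quad_res. chi (y - u) = 1} = {u\<in>{0..<p}. chi u = 1 \<and> chi (y - u) = 1}"
      unfolding quad_res_def by auto
    then show ?thesis
      by (simp add: sum_distrib_left[symmetric] sum.inter_filter[symmetric])
  qed
  also have "\<dots> = (\<Sum>u\<in>{0..<p}. 1 + chi u + chi (u + - y) + chi (u - 0) * chi (u - y))"
  proof (intro sum.cong refl)
    fix u
    have "chi u = 0 \<Longrightarrow> chi (y - u) = -1" and "chi (y - u) = 0 \<Longrightarrow> chi u = -1"
      using y chi_cong[of "y - u" y] chi_cong[of u y]
      by (auto simp: chi_eq_0_iff mod_eq_dvd_iff dvd_eq_mod_eq_0[symmetric] dvd_diff_commute)
    moreover have "chi (y - u) = chi (u - y)"
      using chi_neg[of "u - y"] by simp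
    ultimately show "4 * (if chi u = 1 \<and> chi (y - u) = 1 then 1 else 0)
        = 1 + chi u + chi (u + - y) + chi (u - 0) * chi (u - y)"
      using chi_cases[of u] chi_cases[of "y - u"] by auto
  qed
  also have "\<dots> = p + (\<Sum>u\<in>{0..<p}. chi u) + (\<Sum>u\<in>{0..<p}. chi (u + - y))
      + (\<Sum>u\<in>{0..<p}. chi (u - 0) * chi (u - y))"
    using p_pos by (simp add: sum.distrib)
  also have "\<dots> = p - 1"
  proof -
    have "\<not> p dvd 0 - y"
      using y chi_eq_0_iff[of y] by (simp add: mod_eq_0_iff_dvd)
    then show ?thesis
      using sum_chi sum_chi_translate[of "-y"] sum_chi_diff_mult_chi_diff[of 0 y] by simp
  qed
  finally show ?thesis .
qed

text \<open>With \<open>S x = \<Sum>y\<in>U. chi (x - y)\<close>, the left side is \<open>(\<Sum>t\<in>T. S (r t))\<^sup>2\<close>; apply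
  Cauchy-Schwarz and extend the sum of \<open>S\<^sup>2\<close> to all of \<open>{0..<p}\<close>, where it equals
  \<open>|U| (p - |U|)\<close> by the autocorrelation values.\<close>
lemma sum_chi_scaled_diff_square_le:
  assumes T: "T \<subseteq> {0..<p}" and U: "U \<subseteq> {0..<p}" and r: "\<not> p dvd r"
  shows "(\<Sum>t\<in>T. \<Sum>y\<in>U. chi (r * t - y))^2 \<le> int (card T) * (int (card U) * (p - int (card U)))"
proof -
  define S where "S x = (\<Sum>y\<in>U. chi (x - y))" for x
  have S_mod: "S (x mod p) = S x" for x
    unfolding S_def by (intro sum.cong refl chi_cong) (simp add: mod_diff_left_eq)
  have "(\<Sum>t\<in>T. (S (r * t))^2) = (\<Sum>x\<in>(\<lambda>t. (r * t) mod p) ` T. (S x)^2)"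
    using inj_on_subset[OF inj_on_mod_mult[OF r, of 0] T] by (simp add: sum.reindex S_mod)
  also have "\<dots> \<le> (\<Sum>x\<in>{0..<p}. (S x)^2)"
    by (rule sum_mono2) (use p_pos in auto)
  also have "(\<Sum>x\<in>{0..<p}. (S x)^2) = (\<Sum>x\<in>{0..<p}. \<Sum>y\<in>U. \<Sum>z\<in>U. chi (x - y) * chi (x - z))"
    by (simp add: S_def power2_eq_square sum_product)
  also have "\<dots> = (\<Sum>y\<in>U. \<Sum>z\<in>U. \<Sum>x\<in>{0..<p}. chi (x - y) * chi (x - z))"
    by (subst sum.swap) (intro sum.cong refl sum.swap)
  also have "\<dots> = (\<Sum>y\<in>U. \<Sum>z\<in>U. (if y = z then p else 0) - 1)"
  proof (intro sum.cong refl)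
    fix y z
    assume "y \<in> U" "z \<in> U"
    then have "y \<in> {0..<p}" "z \<in> {0..<p}"
      using U by auto
    then have "\<bar>y - z\<bar> < p"
      by auto
    then show "(\<Sum>x\<in>{0..<p}. chi (x - y) * chi (x - z)) = (if y = z then p else 0) - 1"
      using sum_chi_diff_mult_chi_diff[of y z] dvd_abs_less_imp_eq_0[of p "y - z"] by auto
  qed
  also have "\<dots> = int (card U) * (p - int (card U))"
    using finite_subset[OF U] by (simp add: sum_subtractf)
  finally have "(\<Sum>t\<in>T. (S (r * t))^2) \<le> int (card U) * (p - int (card U))" .
  with square_sum_le_card_mult_sum_squares[of "\<lambda>t. S (r * t)" T]
  show ?thesis
    unfolding S_def by (meson mult_left_mono of_nat_0_le_iff order_trans)
qed

end

locale paley_metric = odd_prime +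
  fixes w :: "int set \<Rightarrow> real"
  assumes gt_5: "p > 5"
    and minus_1_res: "QuadRes p (-1)" and two_nonres: "\<not> QuadRes p 2" and three_nonres: "\<not> QuadRes p 3"
    and weight_pos: "\<And>x y. x \<in> {0..<p} \<Longrightarrow> y \<in> {0..<p} \<Longrightarrow> paley_adj p x y \<Longrightarrow>
      w {x, y} > 0"
    and chosen_path_shortest: "\<And>u v Q. u \<in> {0..<p} \<Longrightarrow> v \<in> {0..<p} \<Longrightarrow>
      u \<noteq> v \<Longrightarrow> is_path {0..<p} (paley_adj p) u v Q \<Longrightarrow>
      path_weight w (paley_ps p u v) \<le> path_weight w Q"
begin

lemma chi_2: "chi 2 = -1"
  using two_nonres gt_5 by (simp add: chi_eq_minus_1_iff)

lemma chi_3: "chi 3 = -1"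
  using three_nonres gt_5 by (simp add: chi_eq_minus_1_iff)

lemma chi_4: "chi 4 = 1"
  using chi_mult[of 2 2] chi_2 by simp

lemma chi_minus_1: "chi (-1) = 1"
  using minus_1_res gt_5 by (simp add: chi_eq_1_iff zmod_zminus1_eq_if)

lemma chi_uminus: "chi (- x) = chi x"
  using chi_mult[of "-1" x] chi_minus_1 by simp

lemma chi_half: "chi half = -1"
proof -
  have "chi (2 * half) = 1"
    using chi_1 chi_cong[of "2 * half" 1] two_mult_half by simp
  then show ?thesis
    using chi_mult[of 2 half] chi_2 by simp
qed

lemma paley_adj_iff: "paley_adj p a b \<longleftrightarrow> chi (b - a) = 1"
  unfolding paley_adj_def chi_eq_1_iff by simp

text \<open>Summing the shortest-path inequalities over all translates turns them into inequalities
  between these numbers.\<close>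
definition diff_weight :: "int \<Rightarrow> real" where
  "diff_weight x = (\<Sum>a\<in>{0..<p}. w {a, (a + x) mod p})"

lemma diff_weight_mod: "diff_weight (x mod p) = diff_weight x"
  unfolding diff_weight_def by (simp add: mod_add_right_eq)

lemma diff_weight_cong: "x mod p = y mod p \<Longrightarrow> diff_weight x = diff_weight y"
  by (metis diff_weight_mod)

lemma diff_weight_pos:
  assumes "chi x = 1"
  shows "diff_weight x > 0"
  unfolding diff_weight_def
proof (rule sum_pos)
  fix a
  assume a: "a \<in> {0..<p}"
  have "chi ((a + x) mod p - a) = chi x"
    by (rule chi_cong) (simp add: mod_diff_left_eq)
  then show "0 < w {a, (a + x) mod p}"
    using a p_pos assms by (intro weight_pos) (auto simp: paley_adj_iff)
qed (use p_pos in auto)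

lemma sum_weight_translate:
  assumes "(l - k - x) mod p = 0"
  shows "(\<Sum>a\<in>{0..<p}. w {(a + k) mod p, (a + l) mod p}) = diff_weight x"
proof -
  have "(a + l) mod p = ((a + k) mod p + x) mod p" for a
  proof -
    have "p dvd (a + l) - (a + k + x)"
      using assms by (simp add: mod_eq_0_iff_dvd algebra_simps)
    then show ?thesis
      by (simp add: mod_add_left_eq mod_eq_dvd_iff)
  qed
  then have "(\<Sum>a\<in>{0..<p}. w {(a + k) mod p, (a + l) mod p})
      = (\<Sum>a\<in>{0..<p}. (\<lambda>c. w {c, (c + x) mod p}) ((a + k) mod p))"
    by simp
  also have "\<dots> = diff_weight x"
    unfolding diff_weight_def by (rule sum_mod_translate)
  finally show ?thesis .
qed

lemma diff_weight_uminus: "diff_weight (- x) = diff_weight x"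
proof -
  have "diff_weight (- x) = (\<Sum>a\<in>{0..<p}. w {(a + x) mod p, (a + 0) mod p})"
    by (rule sum_weight_translate[symmetric]) simp
  also have "\<dots> = diff_weight x"
    unfolding diff_weight_def by (simp add: insert_commute)
  finally show ?thesis .
qed

lemma chosen_path_le_two_step:
  assumes a: "a \<in> {0..<p}" and u: "chi u = 1" and yu: "chi (y - u) = 1" and y: "y mod p \<noteq> 0"
  shows "path_weight w (paley_ps p a ((a + y) mod p)) \<le> w {a, (a + u) mod p} + w {(a + u) mod p, (a + y) mod p}"
proof -
  define c where "c = (a + u) mod p"
  define b where "b = (a + y) mod p"
  have adj_ac: "paley_adj p a c"
    unfolding paley_adj_iff c_def using u chi_cong[of "(a + u) mod p - a" u]
    by (simp add: mod_diff_left_eq)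
  have adj_cb: "paley_adj p c b"
  proof -
    have "((a + y) mod p - (a + u) mod p) mod p = (y - u) mod p"
      by (metis mod_diff_eq add_diff_cancel_left)
    then show ?thesis
      unfolding paley_adj_iff c_def b_def using yu chi_cong by metis
  qed
  have "a \<noteq> b"
  proof
    assume "a = b"
    then have "(a + y) mod p = a mod p"
      using a b_def by simp
    then have "p dvd y"
      by (simp add: mod_eq_dvd_iff)
    then show False
      using y by (simp add: dvd_eq_mod_eq_0)
  qed
  moreover have "x \<noteq> z" if "paley_adj p x z" for x z
    using that chi_eq_0_iff[of 0] by (auto simp: paley_adj_iff)
  ultimately have "is_path {0..<p} (paley_adj p) a b [a, c, b]"
    using a adj_ac adj_cb p_pos unfolding is_path_def c_def b_def
    by (auto simp: less_Suc_eq nth_Cons')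
  then have "path_weight w (paley_ps p a b) \<le> path_weight w [a, c, b]"
    by (intro chosen_path_shortest[OF a _ \<open>a \<noteq> b\<close>]) (use p_pos b_def in simp_all)
  then show ?thesis
    by (simp add: path_weight_def b_def c_def)
qed

lemma sum_chosen_path_le:
  assumes u: "chi u = 1" and yu: "chi (y - u) = 1" and y: "y mod p \<noteq> 0"
  shows "(\<Sum>a\<in>{0..<p}. path_weight w (paley_ps p a ((a + y) mod p))) \<le> diff_weight u + diff_weight (y - u)"
proof -
  have "(\<Sum>a\<in>{0..<p}. path_weight w (paley_ps p a ((a + y) mod p)))
      \<le> (\<Sum>a\<in>{0..<p}. w {a, (a + u) mod p} + w {(a + u) mod p, (a + y) mod p})"
    by (intro sum_mono chosen_path_le_two_step[OF _ u yu y])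
  also have "\<dots> = diff_weight u + diff_weight (y - u)"
    using sum_weight_translate[of y u "y - u"] unfolding diff_weight_def by (simp add: sum.distrib)
  finally show ?thesis .
qed

lemma paley_ps_res:
  assumes "chi y = 1"
  shows "paley_ps p a ((a + y) mod p) = [a, (a + y) mod p]"
proof -
  have "chi ((a + y) mod p - a) = 1"
    using assms chi_cong[of "(a + y) mod p - a" y] by (simp add: mod_diff_left_eq)
  then show ?thesis
    unfolding paley_ps_def chi_eq_1_iff by simp
qed

lemma paley_ps_nonres:
  assumes "chi y = -1" and "y mod p \<noteq> 3 mod p" and "y mod p \<noteq> (-3) mod p"
  shows "paley_ps p a ((a + y) mod p) = [a, (a + y * half) mod p, (a + y) mod p]"
proof -
  have d: "((a + y) mod p - a) mod p = y mod p"
    by (simp add: mod_diff_left_eq)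
  have "((a + (a + y) mod p) * ((p + 1) div 2)) mod p = ((a + (a + y)) * half) mod p"
    unfolding half_def by (metis mod_add_right_eq mod_mult_left_eq)
  also have "(a + (a + y)) * half = a * p + (a + y * half)"
    using two_mult_half by (simp add: algebra_simps)
  finally have "((a + (a + y) mod p) * ((p + 1) div 2)) mod p = (a + y * half) mod p"
    by simp
  moreover have "chi ((a + y) mod p - a) \<noteq> 1"
    using assms(1) chi_cong[OF d] by simp
  ultimately show ?thesis
    unfolding paley_ps_def using d assms(2,3) by (simp add: chi_eq_1_iff)
qed

lemma paley_ps_3: "paley_ps p a ((a + 3) mod p) = [a, (a + 1) mod p, (a + 2) mod p, (a + 3) mod p]"
proof -
  have d: "((a + 3) mod p - a) mod p = 3 mod p"
    by (simp add: mod_diff_left_eq)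
  then have "chi ((a + 3) mod p - a) \<noteq> 1"
    using chi_3 chi_cong[OF d] by simp
  then show ?thesis
    unfolding paley_ps_def using d by (simp add: chi_eq_1_iff)
qed

lemma diff_weight_triangle:
  assumes "chi y = 1" and "chi u = 1" and "chi (y - u) = 1"
  shows "diff_weight y \<le> diff_weight u + diff_weight (y - u)"
  using sum_chosen_path_le[OF assms(2,3)] assms(1) chi_eq_0_iff[of y]
  unfolding diff_weight_def by (simp add: paley_ps_res path_weight_def)

lemma diff_weight_midpoint:
  assumes y: "chi y = -1" "y mod p \<noteq> 3 mod p" "y mod p \<noteq> (-3) mod p"
    and u: "chi u = 1" "chi (y - u) = 1"
  shows "2 * diff_weight (y * half) \<le> diff_weight u + diff_weight (y - u)"
proof -
  have "(y - y * half - y * half) mod p = 0"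
  proof -
    have "y - y * half - y * half = - (p * y)"
      using two_mult_half by (simp add: algebra_simps)
    then show ?thesis by simp
  qed
  then have "(\<Sum>a\<in>{0..<p}. path_weight w (paley_ps p a ((a + y) mod p))) = 2 * diff_weight (y * half)"
    using sum_weight_translate[of y "y * half" "y * half"]
    unfolding diff_weight_def by (simp add: paley_ps_nonres[OF y] path_weight_def sum.distrib)
  then show ?thesis
    using sum_chosen_path_le[OF u] y(1) chi_eq_0_iff[of y] by simp
qed

lemma diff_weight_three:
  assumes "chi u = 1" and "chi (3 - u) = 1"
  shows "3 * diff_weight 1 \<le> diff_weight u + diff_weight (3 - u)"
proof -
  have "(\<Sum>a\<in>{0..<p}. path_weight w (paley_ps p a ((a + 3) mod p))) = 3 * diff_weight 1"
    using sum_weight_translate[of 2 1 1] sum_weight_translate[of 3 2 1]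
    unfolding diff_weight_def by (simp add: paley_ps_3 path_weight_def sum.distrib)
  then show ?thesis
    using sum_chosen_path_le[OF assms] gt_5 by simp
qed

definition m :: int where
  "m = (p - 1) div 4"

lemma p_eq_4m_1: "p = 4 * m + 1"
proof -
  have "p - 1 = 4 * int (card {u\<in>quad_res. chi (half - u) = 1})"
    using card_quad_res_pairs[OF chi_minus_1 chi_half] by simp
  then show ?thesis
    unfolding m_def by simp
qed

lemma card_quad_res_pairs_eq_m:
  assumes "chi y = -1"
  shows "int (card {u\<in>quad_res. chi (y - u) = 1}) = m"
  using card_quad_res_pairs[OF chi_minus_1 assms] p_eq_4m_1 by linarith

lemma card_quad_res_eq: "int (card quad_res) = 2 * m"
  using card_quad_res p_eq_4m_1 by linarith

text \<open>The chosen paths between \<open>a\<close> and \<open>a \<plusminus> 3\<close> do not pass through the midpoint, so the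
  residues \<open>\<plusminus>3/2\<close> are excluded from the extremal argument.\<close>
definition three_halves :: "int set" where
  "three_halves = {(3 * half) mod p, (-3 * half) mod p}"

definition R0 :: "int set" where
  "R0 = quad_res - three_halves"

lemma finite_three_halves [simp]: "finite three_halves"
  unfolding three_halves_def by simp

lemma three_halves_subset: "three_halves \<subseteq> quad_res"
proof -
  have "chi (3 * half) = 1" and "chi (-3 * half) = 1"
    using chi_mult[of 3 half] chi_mult[of "-3" half] chi_uminus[of 3] chi_3 chi_half by simp_all
  then show ?thesis
    unfolding three_halves_def quad_res_def using p_pos by simp
qed

lemma card_three_halves: "card three_halves = 2"
proof -
  have "(2 * ((3 * half) mod p)) mod p = 3 mod p" and "(2 * ((-3 * half) mod p)) mod p = (-3) mod p"
    using double_mod_eq_iff p_pos by simp_all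
  moreover have "3 mod p \<noteq> (-3) mod p"
  proof
    assume "3 mod p = (-3) mod p"
    then have "p dvd 2 * 3"
      by (simp add: mod_eq_dvd_iff)
    then have "p dvd 2 \<or> p dvd 3"
      using prime prime_dvd_mult_iff by blast
    then show False
      using gt_5 zdvd_imp_le by fastforce
  qed
  ultimately have "(3 * half) mod p \<noteq> (-3 * half) mod p"
    by metis
  then show ?thesis
    unfolding three_halves_def by simp
qed

lemma finite_R0: "finite R0"
  unfolding R0_def by simp

lemma R0_subset: "R0 \<subseteq> {0..<p}"
  unfolding R0_def quad_res_def by auto

lemma card_R0: "int (card R0) = 2 * m - 2"
  using card_Diff_subset[OF _ three_halves_subset] card_three_halves card_quad_res_eq
    card_mono[OF finite_quad_res three_halves_subset]
  unfolding R0_def by (simp add: three_halves_def of_nat_diff)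

lemma mem_three_halves_iff:
  assumes "x \<in> {0..<p}"
  shows "x \<in> three_halves \<longleftrightarrow> (2 * x) mod p = 3 mod p \<or> (2 * x) mod p = (-3) mod p"
  using double_mod_eq_iff[OF assms, of 3] double_mod_eq_iff[OF assms, of "-3"]
  unfolding three_halves_def by auto

lemma mem_R0_iff:
  "x \<in> R0 \<longleftrightarrow>
    x \<in> {0..<p} \<and> chi x = 1 \<and> (2 * x) mod p \<noteq> 3 mod p \<and> (2 * x) mod p \<noteq> (-3) mod p"
  unfolding R0_def quad_res_def using mem_three_halves_iff by auto

lemma mem_R0_iff_dvd:
  "x \<in> R0 \<longleftrightarrow> x \<in> {0..<p} \<and> chi x = 1 \<and> \<not> p dvd 2 * x - 3 \<and> \<not> p dvd 2 * x + 3"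
  unfolding mem_R0_iff by (simp add: mod_eq_dvd_iff)

lemma one_mem_R0: "1 \<in> R0"
  unfolding mem_R0_iff_dvd using chi_1 gt_5 not_dvd_small[of "-1"] not_dvd_small[of 5] by simp

lemma four_mem_R0: "4 \<in> R0"
proof -
  have "\<not> p dvd 11"
  proof
    assume "p dvd 11"
    moreover have "p \<le> 11"
      using zdvd_imp_le[OF calculation] by simp
    then have "p = 9"
      using gt_5 p_eq_4m_1 by presburger
    ultimately show False
      by simp
  qed
  then show ?thesis
    unfolding mem_R0_iff_dvd using chi_4 gt_5 not_dvd_small[of 5] by simp
qed

definition max_weight :: real where
  "max_weight = Max (diff_weight ` R0)"

definition heavy :: "int set" where
  "heavy = {x\<in>R0. diff_weight x = max_weight}"

definition light :: "int set" where
  "light = R0 - heavy"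

lemma diff_weight_le_max: "x \<in> R0 \<Longrightarrow> diff_weight x \<le> max_weight"
  unfolding max_weight_def using finite_R0 by simp

lemma heavy_nonempty: "heavy \<noteq> {}"
proof -
  have "max_weight \<in> diff_weight ` R0"
    unfolding max_weight_def using finite_R0 one_mem_R0 by (intro Max_in) auto
  then show ?thesis
    unfolding heavy_def by auto
qed

lemma heavy_subset: "heavy \<subseteq> R0"
  unfolding heavy_def by auto

lemma finite_heavy: "finite heavy" and finite_light: "finite light"
  using finite_R0 unfolding heavy_def light_def by simp_all

lemma card_heavy_light: "int (card heavy) + int (card light) = 2 * m - 2"
proof -
  have "card R0 = card heavy + card light"
    using card_Un_disjoint[OF finite_heavy finite_light] heavy_subset
    unfolding light_def by (simp add: Un_absorb1)
  then show ?thesis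
    using card_R0 by simp
qed

text \<open>For \<open>t\<close> of maximal weight, the midpoint inequality for the nonresidue \<open>2 t\<close> reads
  \<open>2 max_weight \<le> diff_weight u + diff_weight (2 t - u)\<close>, so both terms are maximal.\<close>
lemma heavy_closed:
  assumes t: "t \<in> heavy" and u: "u \<in> R0" and tu: "(2 * t - u) mod p \<in> R0"
  shows "u \<in> heavy"
proof -
  have tR0: "t \<in> R0" and t_max: "diff_weight t = max_weight"
    using t unfolding heavy_def by auto
  have "chi (2 * t) = -1"
    using tR0 chi_mult[of 2 t] chi_2 unfolding mem_R0_iff by simp
  moreover have "(2 * t) mod p \<noteq> 3 mod p" "(2 * t) mod p \<noteq> (-3) mod p"
    using tR0 unfolding mem_R0_iff by simp_all
  moreover have "chi u = 1" and "chi (2 * t - u) = 1"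
    using u tu unfolding mem_R0_iff by simp_all
  ultimately have "2 * diff_weight (2 * t * half) \<le> diff_weight u + diff_weight (2 * t - u)"
    by (rule diff_weight_midpoint)
  moreover have "diff_weight (2 * t * half) = diff_weight t"
    using mod_two_mult_half[of t] by (intro diff_weight_cong) (simp add: mult_ac)
  moreover have "diff_weight (2 * t - u) \<le> max_weight"
    using diff_weight_le_max[OF tu] diff_weight_mod by simp
  moreover have "diff_weight u \<le> max_weight"
    using diff_weight_le_max[OF u] .
  ultimately show ?thesis
    using u t_max unfolding heavy_def by simp
qed

lemma one_mem_light: "1 \<in> light"
proof -
  have "3 * diff_weight 1 \<le> diff_weight 4 + diff_weight (3 - 4)"
    using chi_4 chi_minus_1 by (intro diff_weight_three) simp_all
  moreover have "diff_weight (3 - 4) = diff_weight 1"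
    using diff_weight_uminus[of 1] by simp
  moreover have "diff_weight 4 \<le> max_weight"
    using diff_weight_le_max four_mem_R0 by blast
  moreover have "diff_weight 1 > 0"
    using diff_weight_pos chi_1 by simp
  ultimately show ?thesis
    using one_mem_R0 unfolding light_def heavy_def by auto
qed

lemma heavy_light_diff:
  assumes "t \<in> heavy" and "y \<in> light"
  shows "chi (2 * t - y) = -1 \<or> (2 * t - y) mod p \<in> three_halves"
proof -
  have t: "t \<in> R0" and y: "y \<in> R0" "y \<notin> heavy"
    using assms heavy_subset unfolding light_def by auto
  have "chi (2 * t - y) \<noteq> 0"
  proof
    assume "chi (2 * t - y) = 0"
    then have "chi (2 * t) = chi y"
      by (intro chi_cong) (simp add: chi_eq_0_iff mod_eq_dvd_iff dvd_eq_mod_eq_0[symmetric])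
    then show False
      using t y chi_mult[of 2 t] chi_2 unfolding mem_R0_iff by simp
  qed
  moreover have "(2 * t - y) mod p \<notin> R0"
    using heavy_closed[OF assms(1) y(1)] y(2) by blast
  then have "chi (2 * t - y) = 1 \<Longrightarrow> (2 * t - y) mod p \<in> three_halves"
    using p_pos unfolding R0_def quad_res_def by simp
  ultimately show ?thesis
    using chi_cases by blast
qed

text \<open>The \<open>m\<close> representations \<open>2 t\<^sub>0 = u + (2 t\<^sub>0 - u)\<close> by two residues all give heavy \<open>u\<close>,
  except when \<open>u\<close> or \<open>2 t\<^sub>0 - u\<close> lies in \<open>three_halves\<close>.\<close>
lemma card_heavy_ge: "m - 4 \<le> int (card heavy)"
proof -
  obtain t0 where t0: "t0 \<in> heavy"
    using heavy_nonempty by blast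
  then have t0R0: "t0 \<in> R0"
    using heavy_subset by blast
  define A where "A = {u\<in>quad_res. chi (2 * t0 - u) = 1}"
  define X where "X = three_halves \<union> (\<lambda>e. (2 * t0 - e) mod p) ` three_halves"
  have "int (card A) = m"
    unfolding A_def using t0R0 chi_mult[of 2 t0] chi_2
    by (intro card_quad_res_pairs_eq_m) (simp add: mem_R0_iff)
  moreover have "A \<subseteq> heavy \<union> X"
  proof
    fix u
    assume u: "u \<in> A"
    show "u \<in> heavy \<union> X"
    proof (cases "u \<in> three_halves \<or> (2 * t0 - u) mod p \<in> three_halves")
      case True
      moreover have "u \<in> {0..<p}"
        using u unfolding A_def quad_res_def by simp
      ultimately show ?thesis
        unfolding X_def using diff_mod_eq_imp by blast
    next
      case False
      then have "u \<in> R0" and "(2 * t0 - u) mod p \<in> R0"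
        using u p_pos unfolding A_def R0_def quad_res_def by auto
      then show ?thesis
        using heavy_closed[OF t0] by blast
    qed
  qed
  moreover have "finite X" and "card X \<le> 4"
    unfolding X_def using card_Un_le[of three_halves "(\<lambda>e. (2 * t0 - e) mod p) ` three_halves"]
      card_image_le[OF finite_three_halves, of "\<lambda>e. (2 * t0 - e) mod p"] card_three_halves
    by auto
  ultimately show ?thesis
    using card_mono[of "heavy \<union> X" A] card_Un_le[of heavy X] finite_heavy by fastforce
qed

lemma chi_two_mult_minus_1: "chi (2 * t - 1) = - chi (half - t)"
proof -
  have "-2 * (half - t) = (2 * t - 1) + p * (-1)"
    using two_mult_half by (simp add: algebra_simps)
  then have "(2 * t - 1) mod p = (-2 * (half - t)) mod p"
    by (simp only: mod_mult_self2)
  then have "chi (2 * t - 1) = chi (-2) * chi (half - t)"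
    using chi_cong chi_mult by metis
  then show ?thesis
    using chi_uminus[of 2] chi_2 by simp
qed

text \<open>By \<open>heavy_closed\<close> with \<open>u = 1\<close>, \<open>2 t - 1\<close> is not in \<open>R0\<close>, which leaves the cases
  \<open>2 t - 1 \<in> {0, 3/2, -3/2}\<close> and \<open>chi (2 t - 1) = -1\<close>.\<close>
lemma heavy_subset_half_minus_res:
  "heavy \<subseteq> {u\<in>quad_res. chi (half - u) = 1}
    \<union> insert (half mod p) ((\<lambda>e. ((1 + e) * half) mod p) ` three_halves)"
    (is "_ \<subseteq> _ \<union> ?X")
proof
  fix t
  assume t: "t \<in> heavy"
  then have "t \<in> R0"
    using heavy_subset by blast
  then have t_range: "t \<in> {0..<p}" and "chi t = 1"
    unfolding mem_R0_iff by simp_all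
  have not_R0: "(2 * t - 1) mod p \<notin> R0"
    using heavy_closed[OF t one_mem_R0] one_mem_light unfolding light_def by blast
  consider "chi (2 * t - 1) = 0" | "chi (2 * t - 1) = 1" | "chi (2 * t - 1) = -1"
    using chi_cases by blast
  then show "t \<in> {u\<in>quad_res. chi (half - u) = 1} \<union> ?X"
  proof cases
    case 1
    then have "(2 * t - 1) mod p = 0"
      by (simp add: chi_eq_0_iff)
    then have "t = ((1 + 0) * half) mod p"
      by (rule double_diff_mod_eq_imp[OF t_range])
    then show ?thesis
      by simp
  next
    case 2
    then have "(2 * t - 1) mod p \<in> three_halves"
      using not_R0 p_pos unfolding R0_def quad_res_def by simp
    then show ?thesis
      using double_diff_mod_eq_imp[OF t_range] by blast
  next
    case 3
    then show ?thesis
      using t_range \<open>chi t = 1\<close> chi_two_mult_minus_1[of t] unfolding quad_res_def by simp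
  qed
qed

lemma card_heavy_le: "int (card heavy) \<le> m + 3"
proof -
  define X where "X = insert (half mod p) ((\<lambda>e. ((1 + e) * half) mod p) ` three_halves)"
  have "finite X" and "card X \<le> 3"
    unfolding X_def using card_image_le[OF finite_three_halves, of "\<lambda>e. ((1 + e) * half) mod p"]
      card_three_halves card_insert_le by (auto simp: card_insert_if)
  then have "card heavy \<le> card {u\<in>quad_res. chi (half - u) = 1} + 3"
    using card_mono[of "{u\<in>quad_res. chi (half - u) = 1} \<union> X" heavy] heavy_subset_half_minus_res
      card_Un_le[of "{u\<in>quad_res. chi (half - u) = 1}" X] unfolding X_def by fastforce
  then show ?thesis
    using card_quad_res_pairs_eq_m[OF chi_half] by linarith
qed

lemma sum_chi_heavy_light_le:
  "(\<Sum>t\<in>heavy. \<Sum>y\<in>light. chi (2 * t - y))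
    \<le> 2 * (\<Sum>t\<in>heavy. \<Sum>y\<in>light. of_bool ((2 * t - y) mod p \<in> three_halves))
      - int (card heavy) * int (card light)"
proof -
  have "(\<Sum>t\<in>heavy. \<Sum>y\<in>light. chi (2 * t - y))
      \<le> (\<Sum>t\<in>heavy. \<Sum>y\<in>light. 2 * of_bool ((2 * t - y) mod p \<in> three_halves) - 1)"
  proof (intro sum_mono)
    fix t y
    assume "t \<in> heavy" "y \<in> light"
    then show "chi (2 * t - y) \<le> 2 * of_bool ((2 * t - y) mod p \<in> three_halves) - 1"
      using heavy_light_diff chi_cases[of "2 * t - y"] by fastforce
  qed
  then show ?thesis
    by (simp add: sum_subtractf sum_distrib_left)
qed

lemma three_halves_pairs_le_heavy:
  "(\<Sum>t\<in>heavy. \<Sum>y\<in>light. of_bool ((2 * t - y) mod p \<in> three_halves) :: int) \<le> int (card heavy) * 2"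
proof (rule sum_sum_of_bool_le[OF finite_light])
  fix t
  have "{y\<in>light. (2 * t - y) mod p \<in> three_halves} \<subseteq> (\<lambda>e. (2 * t - e) mod p) ` three_halves"
    using diff_mod_eq_imp light_def heavy_subset R0_subset by blast
  then have "card {y\<in>light. (2 * t - y) mod p \<in> three_halves} \<le> card three_halves"
    using card_mono[OF finite_imageI[OF finite_three_halves]] card_image_le[OF finite_three_halves]
    by (meson order_trans)
  then show "int (card {y\<in>light. (2 * t - y) mod p \<in> three_halves}) \<le> 2"
    using card_three_halves by simp
qed

lemma three_halves_pairs_le_light:
  "(\<Sum>t\<in>heavy. \<Sum>y\<in>light. of_bool ((2 * t - y) mod p \<in> three_halves) :: int) \<le> int (card light) * 2"
proof -
  have "(\<Sum>y\<in>light. \<Sum>t\<in>heavy. of_bool ((2 * t - y) mod p \<in> three_halves) :: int) \<le> int (card light) * 2"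
  proof (rule sum_sum_of_bool_le[OF finite_heavy])
    fix y
    have "{t\<in>heavy. (2 * t - y) mod p \<in> three_halves} \<subseteq> (\<lambda>e. ((y + e) * half) mod p) ` three_halves"
      using double_diff_mod_eq_imp heavy_subset R0_subset by blast
    then have "card {t\<in>heavy. (2 * t - y) mod p \<in> three_halves} \<le> card three_halves"
      using card_mono[OF finite_imageI[OF finite_three_halves]] card_image_le[OF finite_three_halves]
      by (meson order_trans)
    then show "int (card {t\<in>heavy. (2 * t - y) mod p \<in> three_halves}) \<le> 2"
      using card_three_halves by simp
  qed
  then show ?thesis
    by (subst sum.swap)
qed

lemma large_prime_impossible: "p < 53"
proof (rule ccontr)
  assume "\<not> p < 53"
  then have "13 \<le> m"
    using p_eq_4m_1 by linarith
  moreover have "(\<Sum>t\<in>heavy. \<Sum>y\<in>light. chi (2 * t - y))^2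
      \<le> int (card heavy) * (int (card light) * (4 * m + 1 - int (card light)))"
  proof -
    have "light \<subseteq> {0..<p}" and "heavy \<subseteq> {0..<p}"
      using heavy_subset R0_subset unfolding light_def by auto
    moreover have "\<not> p dvd 2"
      using not_dvd_small[of 2] gt_5 by simp
    ultimately show ?thesis
      using sum_chi_scaled_diff_square_le[of heavy light 2] p_eq_4m_1 by simp
  qed
  ultimately show False
    using card_heavy_light card_heavy_ge card_heavy_le
      sum_chi_heavy_light_le three_halves_pairs_le_heavy three_halves_pairs_le_light
    by (intro extremal_counts_impossible[of "int (card heavy)" "int (card light)" m]) (simp_all add: mult.commute)
qed

text \<open>\<open>p = 29\<close> is the only prime below 53 meeting the hypotheses; there the counting is too
  coarse, but five of the weight inequalities already contradict \<open>diff_weight 1 > 0\<close>.\<close>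
lemma p_ne_29: "p \<noteq> 29"
proof
  assume p: "p = 29"
  have half: "half = 15"
    using two_mult_half p by simp
  have chi_5: "chi 5 = 1"
  proof -
    have "[(11::int)^2 = 5] (mod p)"
      unfolding p by (simp add: cong_def)
    then have "QuadRes p 5"
      unfolding QuadRes_def by blast
    then show ?thesis
      using gt_5 by (simp add: chi_eq_1_iff)
  qed
  have chi_6: "chi 6 = 1" and chi_9: "chi 9 = 1" and chi_8: "chi 8 = -1" and chi_10: "chi 10 = -1"
    using chi_mult[of 2 3] chi_mult[of 3 3] chi_mult[of 2 4] chi_mult[of 2 5] chi_2 chi_3 chi_4 chi_5
    by simp_all
  have chi_11: "chi 11 = -1"
    using chi_cong[of 11 40] chi_mult[of 8 5] chi_8 chi_5 p by simp
  have "3 * diff_weight 1 \<le> diff_weight 4 + diff_weight (3 - 4)"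
    using chi_4 chi_minus_1 by (intro diff_weight_three) simp_all
  moreover have "diff_weight 6 \<le> diff_weight 1 + diff_weight (6 - 1)"
    using chi_6 chi_1 chi_5 by (intro diff_weight_triangle) simp_all
  moreover have "2 * diff_weight (8 * half) \<le> diff_weight 9 + diff_weight (8 - 9)"
    using chi_8 chi_9 chi_minus_1 p by (intro diff_weight_midpoint) simp_all
  moreover have "2 * diff_weight (10 * half) \<le> diff_weight 1 + diff_weight (10 - 1)"
    using chi_10 chi_9 chi_1 p by (intro diff_weight_midpoint) simp_all
  moreover have "2 * diff_weight (11 * half) \<le> diff_weight 5 + diff_weight (11 - 5)"
    using chi_11 chi_5 chi_6 p by (intro diff_weight_midpoint) simp_all
  moreover have "diff_weight (8 * half) = diff_weight 4" and "diff_weight (10 * half) = diff_weight 5"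
    and "diff_weight (11 * half) = diff_weight (-9)"
    by (rule diff_weight_cong, simp only: half, simp add: p)+
  moreover have "diff_weight (-1) = diff_weight 1" and "diff_weight (-9) = diff_weight 9"
    using diff_weight_uminus by blast+
  moreover have "diff_weight 1 > 0"
    using diff_weight_pos chi_1 by simp
  ultimately show False
    by simp
qed

lemma no_paley_metric: False
proof -
  have "QuadRes 13 3"
    unfolding QuadRes_def cong_def by (intro exI[of _ 4]) simp
  moreover have "QuadRes 37 3"
    unfolding QuadRes_def cong_def by (intro exI[of _ 15]) simp
  moreover have "QuadRes 17 2"
    unfolding QuadRes_def cong_def by (intro exI[of _ 6]) simp
  moreover have "QuadRes 41 2"
    unfolding QuadRes_def cong_def by (intro exI[of _ 17]) simp
  ultimately have "p \<noteq> 13" "p \<noteq> 37" "p \<noteq> 17" "p \<noteq> 41"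
    using two_nonres three_nonres by auto
  moreover have "p = 9 \<or> p = 13 \<or> p = 17 \<or> p = 21 \<or> p = 25 \<or> p = 29 \<or> p = 33 \<or> p = 37 \<or> p = 41
      \<or> p = 45 \<or> p = 49"
    using p_eq_4m_1 gt_5 large_prime_impossible by presburger
  moreover have "\<not> 3 dvd p" "\<not> 5 dvd p" "\<not> 7 dvd p"
  proof -
    have "\<not> d dvd p" if "1 < d" "d < p" for d
      using prime that unfolding prime_int_iff by (auto dest!: spec[of _ d])
    moreover have "7 < p"
      using p_eq_4m_1 gt_5 by presburger
    ultimately show "\<not> 3 dvd p" "\<not> 5 dvd p" "\<not> 7 dvd p"
      by simp_all
  qed
  ultimately show False
    using p_ne_29 by auto
qed

end

theorem proposition2p2:
  fixes p :: int
  assumes "prime p" and "p > 5"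
    and "QuadRes p (-1)" and "\<not> QuadRes p 2" and "\<not> QuadRes p 3"
  shows "\<not> metrizable (paley_vertices p) (paley_adj p) (paley_ps p)"
proof
  assume "metrizable (paley_vertices p) (paley_adj p) (paley_ps p)"
  then obtain w :: "int set \<Rightarrow> real" where
    "\<forall>x\<in>{0..<p}. \<forall>y\<in>{0..<p}. paley_adj p x y \<longrightarrow> w {x, y} > 0" and
    "\<forall>u\<in>{0..<p}. \<forall>v\<in>{0..<p}. u \<noteq> v \<longrightarrow> (\<forall>Q. is_path {0..<p} (paley_adj p) u v Q \<longrightarrow>
       path_weight w (paley_ps p u v) \<le> path_weight w Q)"
    unfolding metrizable_def paley_vertices_def by blast
  then interpret paley_metric p w
    using assms by unfold_locales auto
  show False
    by (rule no_paley_metric)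
qed

end
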